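(* Let $c>0$. Suppose that for every $d$ that is a power of $2$ we are given a nonsingular $d\times d$ matrix $A=A_d$ with all entries in $\{+1,-1\}$ such that the matrix $B:=2^dA^{-1}$ is integral, has nonnegative row sums, and every entry of the first row of $B$ is nonnegative and has absolute value at least $(cd)^{d/2}$. Then there is a constant $c'>0$ (depending only on $c$) such that for every such $d$ and every integral vector $b\in\mathbb{Z}^d$ with $b>0$, the unique solution $z$ of $Az=b$ has first component satisfying $z_1>0$ and $|z_1|\ge (c'd)^{d/2}$.
   Context: For $x\in\mathbb{R}^n$, the notation $x>0$ means that all entries of $x$ are nonnegative and $x\neq 0$. (In the paper, a quantity $Q=Q(d)$ is called "large" if there is a constant $c>0$ with $|Q|\ge (cd)^{d/2}$ for all considered $d$; the hypotheses and conclusion above spell this out.) *)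

theory Defs
  imports "Jordan_Normal_Form.Gauss_Jordan_Elimination" "Jordan_Normal_Form.Determinant"
begin

definition is_pow2 :: "nat \<Rightarrow> bool" where
  "is_pow2 d \<longleftrightarrow> (\<exists>k. d = 2 ^ k)"

definition scaled_inv :: "nat \<Rightarrow> real mat \<Rightarrow> real mat" where
  "scaled_inv d A = (2 ^ d) \<cdot>\<^sub>m the (mat_inverse A)"

definition hyp_family :: "real \<Rightarrow> (nat \<Rightarrow> real mat) \<Rightarrow> bool" where
  "hyp_family c A \<longleftrightarrow> (\<forall>d. is_pow2 d \<longrightarrow>
     A d \<in> carrier_mat d d \<and> det (A d) \<noteq> 0 \<and>
     (\<forall>i<d. \<forall>j<d. A d $$ (i,j) = 1 \<or> A d $$ (i,j) = -1) \<and>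
     (let B = scaled_inv d (A d) in
        (\<forall>i<d. \<forall>j<d. B $$ (i,j) \<in> \<int>) \<and>
        (\<forall>i<d. (\<Sum>j<d. B $$ (i,j)) \<ge> 0) \<and>
        (\<forall>j<d. B $$ (0,j) \<ge> 0 \<and> \<bar>B $$ (0,j)\<bar> \<ge> (c * real d) powr (real d / 2))))"

end

theory Submission
  imports Defs
begin

text \<open>Since \<open>z = A\<^sup>-\<^sup>1 b = 2\<^sup>-\<^sup>d B b\<close>, the first component \<open>z\<^sub>1\<close> is \<open>2\<^sup>-\<^sup>d\<close> times a combination
  of the first row of \<open>B\<close> with nonnegative integer weights, at least one of them \<open>\<ge> 1\<close>.
  Hence \<open>z\<^sub>1 \<ge> 2\<^sup>-\<^sup>d (c d)\<^bsup>d/2\<^esup> = (c d / 4)\<^bsup>d/2\<^esup>\<close>, so \<open>c' = c/4\<close> works.\<close>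

lemma solution_eq_mat_inverse_mult_vec:
  fixes A :: "'a::field mat"
  assumes A: "A \<in> carrier_mat n n" and "det A \<noteq> 0"
    and z: "z \<in> carrier_vec n" and "A *\<^sub>v z = b"
  shows "mat_inverse A = Some (the (mat_inverse A))"
    and "z = the (mat_inverse A) *\<^sub>v b"
proof -
  have "A \<in> Units (ring_mat TYPE('a) n undefined)"
    using det_non_zero_imp_unit[OF A \<open>det A \<noteq> 0\<close>] .
  then obtain M where M: "mat_inverse A = Some M"
    using mat_inverse(1)[OF A, of undefined] by (cases "mat_inverse A") auto
  then show "mat_inverse A = Some (the (mat_inverse A))" by simp
  from mat_inverse(2)[OF A M] have MA: "M * A = 1\<^sub>m n" and Mc: "M \<in> carrier_mat n n"
    by auto
  have "M *\<^sub>v b = (M * A) *\<^sub>v z"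
    using \<open>A *\<^sub>v z = b\<close> assoc_mult_mat_vec[OF Mc A z] by simp
  also have "\<dots> = z" using MA z by simp
  finally show "z = the (mat_inverse A) *\<^sub>v b" using M by simp
qed

lemma solution_component_scaled_inv:
  fixes A :: "real mat"
  assumes A: "A \<in> carrier_mat d d" and "det A \<noteq> 0"
    and "z \<in> carrier_vec d" and "A *\<^sub>v z = b" and "dim_vec b = d" and "i < d"
  shows "z $ i = (\<Sum>j<d. scaled_inv d A $$ (i,j) * b $ j) / 2 ^ d"
proof -
  define M where "M = the (mat_inverse A)"
  note inv = solution_eq_mat_inverse_mult_vec[OF assms(1-4), folded M_def]
  have Mc: "M \<in> carrier_mat d d" using mat_inverse(2)[OF A inv(1)] by auto
  have "z $ i = (\<Sum>j<d. M $$ (i,j) * b $ j)"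
    using inv(2) Mc assms(5,6) by (simp add: scalar_prod_def lessThan_atLeast0 mult.commute)
  also have "\<dots> = (\<Sum>j<d. 2 ^ d * M $$ (i,j) * b $ j) / 2 ^ d"
    by (simp add: sum_divide_distrib)
  also have "\<dots> = (\<Sum>j<d. scaled_inv d A $$ (i,j) * b $ j) / 2 ^ d"
    using Mc \<open>i < d\<close> by (simp add: scaled_inv_def M_def)
  finally show ?thesis .
qed

lemma nonneg_int_vec_entry_ge_one:
  assumes "dim_vec b = d" and "\<forall>i<d. b $ i \<in> \<int> \<and> b $ i \<ge> (0::real)" and "b \<noteq> 0\<^sub>v d"
  obtains j where "j < d" and "b $ j \<ge> 1"
proof -
  from assms(1,3) obtain j where j: "j < d" "b $ j \<noteq> 0"
    by (metis eq_vecI index_zero_vec(1,2))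
  from assms(2) j obtain m where "b $ j = of_int m" by (auto elim: Ints_cases)
  with assms(2) j have "b $ j \<ge> 1" by auto
  with j show thesis using that by blast
qed

lemma weighted_sum_ge_lower_bound:
  fixes w b :: "nat \<Rightarrow> real"
  assumes "finite J" and "j \<in> J" and "b j \<ge> 1" and "\<forall>i\<in>J. b i \<ge> 0"
    and "\<forall>i\<in>J. w i \<ge> L" and "L \<ge> 0"
  shows "L \<le> (\<Sum>i\<in>J. w i * b i)"
proof -
  have "L \<le> w j" using assms(2,5) by blast
  also have "\<dots> \<le> w j * b j"
    using assms(2-6) by (metis mult_left_mono mult.right_neutral order_trans)
  also have "\<dots> \<le> (\<Sum>i\<in>J. w i * b i)"
    by (rule member_le_sum) (use assms order_trans in \<open>auto intro: mult_nonneg_nonneg\<close>)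
  finally show ?thesis .
qed

lemma powr_half_div_four:
  fixes x :: real
  assumes "x \<ge> 0"
  shows "(x / 4) powr (real n / 2) = x powr (real n / 2) / 2 ^ n"
proof -
  have "(4::real) powr (real n / 2) = (2 powr 2) powr (real n / 2)" by simp
  also have "\<dots> = 2 ^ n" by (simp add: powr_powr powr_realpow)
  finally show ?thesis using assms by (simp add: powr_divide)
qed

theorem mainTheorem4:
  fixes c :: real
  assumes "c > 0"
  shows "\<exists>c'>0. \<forall>A. hyp_family c A \<longrightarrow>
    (\<forall>d b z. is_pow2 d \<longrightarrow> dim_vec b = d \<longrightarrow>
       (\<forall>i<d. b $ i \<in> \<int> \<and> b $ i \<ge> 0) \<longrightarrow> b \<noteq> 0\<^sub>v d \<longrightarrow>
       z \<in> carrier_vec d \<longrightarrow> A d *\<^sub>v z = b \<longrightarrow>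
       z $ 0 > 0 \<and> \<bar>z $ 0\<bar> \<ge> (c' * real d) powr (real d / 2))"
proof (intro exI[of _ "c/4"] conjI allI impI)
  show "c/4 > 0" using assms by simp
  fix A d b and z :: "real vec"
  assume "hyp_family c A" and "is_pow2 d" and b: "dim_vec b = d"
    "\<forall>i<d. b $ i \<in> \<int> \<and> b $ i \<ge> 0" "b \<noteq> 0\<^sub>v d"
    and z: "z \<in> carrier_vec d" "A d *\<^sub>v z = b"
  define L where "L = (c * real d) powr (real d / 2)"
  have "A d \<in> carrier_mat d d" "det (A d) \<noteq> 0"
    and row: "\<forall>j<d. scaled_inv d (A d) $$ (0,j) \<ge> 0 \<and> \<bar>scaled_inv d (A d) $$ (0,j)\<bar> \<ge> L"
    using \<open>hyp_family c A\<close> \<open>is_pow2 d\<close> unfolding hyp_family_def Let_def L_def by blast+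
  obtain j where "j < d" "b $ j \<ge> 1" using nonneg_int_vec_entry_ge_one[OF b] .
  have "d > 0" using \<open>j < d\<close> by simp
  have "L > 0" using assms \<open>d > 0\<close> by (simp add: L_def)
  have "L \<le> (\<Sum>j<d. scaled_inv d (A d) $$ (0,j) * b $ j)"
    by (rule weighted_sum_ge_lower_bound) (use \<open>j < d\<close> \<open>b $ j \<ge> 1\<close> b row \<open>L > 0\<close> in auto)
  then have "L / 2 ^ d \<le> z $ 0"
    using solution_component_scaled_inv[OF \<open>A d \<in> _\<close> \<open>det (A d) \<noteq> 0\<close> z b(1) \<open>d > 0\<close>]
    by (simp add: divide_right_mono)
  moreover have "L / 2 ^ d > 0" using \<open>L > 0\<close> by simp
  moreover have "(c/4 * real d) powr (real d / 2) = L / 2 ^ d"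
    using powr_half_div_four[of "c * real d" d] assms by (simp add: L_def)
  ultimately show "z $ 0 > 0" "\<bar>z $ 0\<bar> \<ge> (c/4 * real d) powr (real d / 2)"
    by auto
qed

end
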